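(* Let $\psi,\varphi$ be CNF formulas neither of which contains a tautological clause. If $\psi\models\varphi$, then $\psi[x_\varepsilon]\models\varphi[x_\varepsilon]$ for every variable $x\in\mathrm{Vars}(\varphi)\cup\mathrm{Vars}(\psi)$.
   Context: A CNF formula is a finite set of clauses, each clause a finite set of literals; the empty clause is unsatisfiable and the empty CNF formula is true. A clause is tautological if it contains both $x$ and $\neg x$ for some variable $x$. For a CNF formula $\phi$ and a variable $x$, the deletion reduct $\phi[x_\varepsilon]$ is obtained from $\phi$ by deleting all occurrences of the literals $x$ and $\neg x$ from all clauses (clauses are kept, possibly becoming empty). $\models$ denotes classical propositional entailment. *)

theory Defs
  imports Main
begin

text \<open>A literal is a pair (variable, polarity); True = positive literal x, False = negative literal not x.\<close>
type_synonym 'v lit = "'v \<times> bool"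
type_synonym 'v clause = "'v lit set"
type_synonym 'v cnf = "'v clause set"

definition is_cnf :: "'v cnf \<Rightarrow> bool" where
  "is_cnf \<phi> \<longleftrightarrow> finite \<phi> \<and> (\<forall>C\<in>\<phi>. finite C)"

definition lit_sat :: "('v \<Rightarrow> bool) \<Rightarrow> 'v lit \<Rightarrow> bool" where
  "lit_sat \<alpha> l \<longleftrightarrow> \<alpha> (fst l) = snd l"

definition clause_sat :: "('v \<Rightarrow> bool) \<Rightarrow> 'v clause \<Rightarrow> bool" where
  "clause_sat \<alpha> C \<longleftrightarrow> (\<exists>l\<in>C. lit_sat \<alpha> l)"

definition cnf_sat :: "('v \<Rightarrow> bool) \<Rightarrow> 'v cnf \<Rightarrow> bool" where
  "cnf_sat \<alpha> \<phi> \<longleftrightarrow> (\<forall>C\<in>\<phi>. clause_sat \<alpha> C)"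

definition entails :: "'v cnf \<Rightarrow> 'v cnf \<Rightarrow> bool" (infix "\<Turnstile>\<^sub>c" 50) where
  "\<psi> \<Turnstile>\<^sub>c \<phi> \<longleftrightarrow> (\<forall>\<alpha>. cnf_sat \<alpha> \<psi> \<longrightarrow> cnf_sat \<alpha> \<phi>)"

definition tautological :: "'v clause \<Rightarrow> bool" where
  "tautological C \<longleftrightarrow> (\<exists>x. (x, True) \<in> C \<and> (x, False) \<in> C)"

definition vars :: "'v cnf \<Rightarrow> 'v set" where
  "vars \<phi> = {fst l | l. \<exists>C\<in>\<phi>. l \<in> C}"

definition del_reduct :: "'v cnf \<Rightarrow> 'v \<Rightarrow> 'v cnf" where
  "del_reduct \<phi> x = (\<lambda>C. C - {(x, True), (x, False)}) ` \<phi>"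

end

theory Submission
  imports Defs
begin

text \<open>If \<open>\<alpha>\<close> satisfies \<open>\<psi>[x\<^sub>\<epsilon>]\<close>, then every extension \<open>\<alpha>(x := b)\<close> satisfies \<open>\<psi>\<close> and hence \<open>\<phi>\<close>.
  A clause \<open>D\<close> of \<open>\<phi>\<close> whose reduct is falsified by \<open>\<alpha>\<close> can then only be satisfied
  through its \<open>x\<close>-literals, so it would contain both \<open>x\<close> and \<open>\<not>x\<close>.\<close>

lemma lit_sat_fun_upd_other:
  "fst l \<noteq> x \<Longrightarrow> lit_sat (\<alpha>(x := b)) l \<longleftrightarrow> lit_sat \<alpha> l"
  by (simp add: lit_sat_def)

lemma clause_sat_fun_upd_if_del:
  assumes "clause_sat \<alpha> (C - {(x, True), (x, False)})"
  shows "clause_sat (\<alpha>(x := b)) C"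
proof -
  obtain l where l: "l \<in> C - {(x, True), (x, False)}" "lit_sat \<alpha> l"
    using assms unfolding clause_sat_def by blast
  have "fst l \<noteq> x"
    using l(1) by (cases l) auto
  then have "lit_sat (\<alpha>(x := b)) l"
    using l(2) by (simp add: lit_sat_fun_upd_other)
  with l(1) show ?thesis
    unfolding clause_sat_def by blast
qed

lemma cnf_sat_fun_upd_if_del_reduct:
  "cnf_sat \<alpha> (del_reduct \<psi> x) \<Longrightarrow> cnf_sat (\<alpha>(x := b)) \<psi>"
  unfolding cnf_sat_def del_reduct_def by (auto intro: clause_sat_fun_upd_if_del)

lemma clause_sat_del_if_fun_upd:
  assumes "\<not> tautological D" and "\<And>b. clause_sat (\<alpha>(x := b)) D"
  shows "clause_sat \<alpha> (D - {(x, True), (x, False)})"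
proof (rule ccontr)
  assume falsified: "\<not> clause_sat \<alpha> (D - {(x, True), (x, False)})"
  have "(x, b) \<in> D" for b
  proof -
    obtain l where l: "l \<in> D" "lit_sat (\<alpha>(x := b)) l"
      using assms(2) unfolding clause_sat_def by blast
    have "fst l = x"
    proof (rule ccontr)
      assume "fst l \<noteq> x"
      then have "l \<in> D - {(x, True), (x, False)}" "lit_sat \<alpha> l"
        using l by (auto simp: lit_sat_fun_upd_other)
      then show False
        using falsified unfolding clause_sat_def by blast
    qed
    then have "l = (x, b)"
      using l(2) by (simp add: lit_sat_def prod_eq_iff)
    then show ?thesis
      using l(1) by simp
  qed
  then show False
    using assms(1) unfolding tautological_def by blast
qed

lemma cnf_sat_del_reduct_if_fun_upd:
  assumes "\<forall>D\<in>\<phi>. \<not> tautological D" and "\<And>b. cnf_sat (\<alpha>(x := b)) \<phi>"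
  shows "cnf_sat \<alpha> (del_reduct \<phi> x)"
  unfolding cnf_sat_def del_reduct_def
proof
  fix D' assume "D' \<in> (\<lambda>C. C - {(x, True), (x, False)}) ` \<phi>"
  then obtain D where "D \<in> \<phi>" and "D' = D - {(x, True), (x, False)}"
    by blast
  with assms show "clause_sat \<alpha> D'"
    unfolding cnf_sat_def by (simp add: clause_sat_del_if_fun_upd)
qed

theorem mainTheorem3:
  fixes \<psi> \<phi> :: "'v cnf" and x :: 'v
  assumes "is_cnf \<psi>" and "is_cnf \<phi>"
    and "\<forall>C\<in>\<psi>. \<not> tautological C"
    and "\<forall>C\<in>\<phi>. \<not> tautological C"
    and "\<psi> \<Turnstile>\<^sub>c \<phi>"
    and "x \<in> vars \<phi> \<union> vars \<psi>"
  shows "del_reduct \<psi> x \<Turnstile>\<^sub>c del_reduct \<phi> x"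
  unfolding entails_def
proof (intro allI impI)
  fix \<alpha> :: "'v \<Rightarrow> bool"
  assume "cnf_sat \<alpha> (del_reduct \<psi> x)"
  then have "cnf_sat (\<alpha>(x := b)) \<psi>" for b
    by (rule cnf_sat_fun_upd_if_del_reduct)
  with assms(5) have "cnf_sat (\<alpha>(x := b)) \<phi>" for b
    unfolding entails_def by blast
  with assms(4) show "cnf_sat \<alpha> (del_reduct \<phi> x)"
    by (rule cnf_sat_del_reduct_if_fun_upd)
qed

end
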